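(* For every $l\in\mathbb Z/n\mathbb Z$, the generating series satisfy $b'_l(u)=b_l(u+d_l)$ in $\mathcal Y_{\underline d}[[u^{-1}]]$, where $b_l(u+d_l)=\sum_{s\ge0}b_{l,s}(u+d_l)^{-s-1}$ is expanded in powers of $u^{-1}$.
   Context: Fix $n\ge1$, nonnegative integers $\underline d=(d_l)_{l\in\mathbb Z/n\mathbb Z}$. Let $\mathfrak a_{\underline d}$ be the Lie algebra with basis $e_{l,ij},e'_{l,ij}$ ($1\le i,j\le d_l$), $q_{l,i},p_{l,i}$ ($1\le i\le d_l$), $f_{l,ij}$ ($1\le i\le d_{l+1}$, $1\le j\le d_l$), $l\in\mathbb Z/n\mathbb Z$, with brackets $[e_{l,ij},e_{l,km}]=\delta_{jk}e_{l,im}-\delta_{im}e_{l,kj}$ and likewise for $e'$; $[e_{l,ij},q_{l,k}]=\delta_{jk}q_{l,i}$; $[e'_{l,ij},p_{l,k}]=-\delta_{ki}p_{l,j}$; $[q_{l,j},p_{l+1,i}]=f_{l,ij}$; $[e_{l,ij},f_{l,mk}]=\delta_{jk}f_{l,mi}$; $[e'_{l+1,ij},f_{l,mk}]=-\delta_{mi}f_{l,jk}$; all other brackets zero. Let $R\subset U(\mathfrak a_{\underline d})$ be spanned by $\sum_{m=1}^{d_l}e_{l,mj}f_{l,im}+\sum_{m=1}^{d_{l+1}}f_{l,mj}e'_{l+1,im}+\tfrac12(p_{l+1,i}q_{l,j}+q_{l,j}p_{l+1,i})$, and $\mathfrak{gl}(V_{\underline d})_{\rm diag}$ be spanned by $e_{l,ij}+e'_{l,ij}$;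 $\mathcal Y_{\underline d}:=\big(U(\mathfrak a_{\underline d})/U(\mathfrak a_{\underline d})(R+\mathfrak{gl}(V_{\underline d})_{\rm diag})\big)^{\mathfrak{gl}(V_{\underline d})_{\rm diag}}$. Let $b_{l,s}$ be the image of $\sum p_{l,i_1}e_{l,i_1i_2}\cdots e_{l,i_si_{s+1}}q_{l,i_{s+1}}$, $b'_{l,s}$ the image of $(-1)^s\sum p_{l,i_1}e'_{l,i_1i_2}\cdots e'_{l,i_si_{s+1}}q_{l,i_{s+1}}$ ($s\ge0$), and $b_l(u)=\sum_{s\ge0}b_{l,s}u^{-s-1}$, $b'_l(u)=\sum_{s\ge0}b'_{l,s}u^{-s-1}$. *)

theory Defs
  imports Complex_Main
begin

text \<open>Generators of the Lie algebra a_d.  Indices are 0-based: l ranges over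
  0..n-1 (representing Z/nZ), and E l i j stands for e_{l,(i+1)(j+1)} etc.\<close>
datatype gen = E nat nat nat | E' nat nat nat | Q nat nat | P nat nat | F nat nat nat

definition suc_mod :: "nat \<Rightarrow> nat \<Rightarrow> nat" where
  "suc_mod n l = (l + 1) mod n"

fun valid_gen :: "nat \<Rightarrow> (nat \<Rightarrow> nat) \<Rightarrow> gen \<Rightarrow> bool" where
  "valid_gen n d (E l i j) = (l < n \<and> i < d l \<and> j < d l)"
| "valid_gen n d (E' l i j) = (l < n \<and> i < d l \<and> j < d l)"
| "valid_gen n d (Q l i) = (l < n \<and> i < d l)"
| "valid_gen n d (P l i) = (l < n \<and> i < d l)"
| "valid_gen n d (F l i j) = (l < n \<and> i < d (suc_mod n l) \<and> j < d l)"

text \<open>Elements of the free associative algebra on the generators, as coefficient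
  functions on words (only finitely supported ones are ever built).\<close>
type_synonym elt = "gen list \<Rightarrow> complex"

definition mono :: "gen list \<Rightarrow> elt" where
  "mono u = (\<lambda>w. if w = u then 1 else 0)"

abbreviation gn :: "gen \<Rightarrow> elt" where
  "gn x \<equiv> mono [x]"

definition zero_el :: elt where "zero_el = (\<lambda>w. 0)"
definition add_el :: "elt \<Rightarrow> elt \<Rightarrow> elt" where "add_el f g = (\<lambda>w. f w + g w)"
definition sub_el :: "elt \<Rightarrow> elt \<Rightarrow> elt" where "sub_el f g = (\<lambda>w. f w - g w)"
definition smult_el :: "complex \<Rightarrow> elt \<Rightarrow> elt" where "smult_el c f = (\<lambda>w. c * f w)"
definition sum_el :: "('a \<Rightarrow> elt) \<Rightarrow> 'a set \<Rightarrow> elt" where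
  "sum_el f A = (\<lambda>w. \<Sum>a\<in>A. f a w)"
definition mul_el :: "elt \<Rightarrow> elt \<Rightarrow> elt" where
  "mul_el f g = (\<lambda>w. \<Sum>k\<in>{..length w}. f (take k w) * g (drop k w))"

definition kd :: "nat \<Rightarrow> nat \<Rightarrow> complex" where
  "kd i j = (if i = j then 1 else 0)"

fun bra :: "nat \<Rightarrow> gen \<Rightarrow> gen \<Rightarrow> elt" where
  "bra n (E l i j) (E l' k m) = (if l = l' then
      sub_el (smult_el (kd j k) (gn (E l i m))) (smult_el (kd i m) (gn (E l k j))) else zero_el)"
| "bra n (E' l i j) (E' l' k m) = (if l = l' then
      sub_el (smult_el (kd j k) (gn (E' l i m))) (smult_el (kd i m) (gn (E' l k j))) else zero_el)"
| "bra n (E l i j) (Q l' k) = (if l = l' then smult_el (kd j k) (gn (Q l i)) else zero_el)"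
| "bra n (Q l' k) (E l i j) = (if l = l' then smult_el (- kd j k) (gn (Q l i)) else zero_el)"
| "bra n (E' l i j) (P l' k) = (if l = l' then smult_el (- kd k i) (gn (P l j)) else zero_el)"
| "bra n (P l' k) (E' l i j) = (if l = l' then smult_el (kd k i) (gn (P l j)) else zero_el)"
| "bra n (Q l j) (P l' i) = (if l' = suc_mod n l then gn (F l i j) else zero_el)"
| "bra n (P l' i) (Q l j) = (if l' = suc_mod n l then smult_el (-1) (gn (F l i j)) else zero_el)"
| "bra n (E l i j) (F l' m k) = (if l = l' then smult_el (kd j k) (gn (F l m i)) else zero_el)"
| "bra n (F l' m k) (E l i j) = (if l = l' then smult_el (- kd j k) (gn (F l m i)) else zero_el)"
| "bra n (E' l' i j) (F l m k) = (if l' = suc_mod n l then smult_el (- kd m i) (gn (F l j k)) else zero_el)"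
| "bra n (F l m k) (E' l' i j) = (if l' = suc_mod n l then smult_el (kd m i) (gn (F l j k)) else zero_el)"
| "bra n _ _ = zero_el"

definition commrel :: "nat \<Rightarrow> gen \<Rightarrow> gen \<Rightarrow> elt" where
  "commrel n x y = sub_el (sub_el (mul_el (gn x) (gn y)) (mul_el (gn y) (gn x))) (bra n x y)"

definition Rrel :: "nat \<Rightarrow> (nat \<Rightarrow> nat) \<Rightarrow> nat \<Rightarrow> nat \<Rightarrow> nat \<Rightarrow> elt" where
  "Rrel n d l i j =
     add_el (add_el
       (sum_el (\<lambda>m. mul_el (gn (E l m j)) (gn (F l i m))) {..<d l})
       (sum_el (\<lambda>m. mul_el (gn (F l m j)) (gn (E' (suc_mod n l) i m))) {..<d (suc_mod n l)}))
       (smult_el (1/2) (add_el (mul_el (gn (P (suc_mod n l) i)) (gn (Q l j)))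
                               (mul_el (gn (Q l j)) (gn (P (suc_mod n l) i)))))"

definition diagrel :: "nat \<Rightarrow> nat \<Rightarrow> nat \<Rightarrow> elt" where
  "diagrel l i j = add_el (gn (E l i j)) (gn (E' l i j))"

text \<open>Preimage in the free algebra of U(a) (R + gl_diag): the sum of the two-sided
  ideal of commutator relations and the left ideal generated by R and gl_diag.
  Membership of a difference in this set is equality in
  U(a)/U(a)(R + gl_diag), which contains Y_d.\<close>
inductive_set Jset :: "nat \<Rightarrow> (nat \<Rightarrow> nat) \<Rightarrow> elt set" for n d where
  zero: "zero_el \<in> Jset n d"
| comm: "\<lbrakk>list_all (valid_gen n d) u; list_all (valid_gen n d) v;
          valid_gen n d x; valid_gen n d y\<rbrakk>
         \<Longrightarrow> mul_el (mul_el (mono u) (commrel n x y)) (mono v) \<in> Jset n d"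
| rel: "\<lbrakk>list_all (valid_gen n d) u; l < n; i < d (suc_mod n l); j < d l\<rbrakk>
         \<Longrightarrow> mul_el (mono u) (Rrel n d l i j) \<in> Jset n d"
| diag: "\<lbrakk>list_all (valid_gen n d) u; l < n; i < d l; j < d l\<rbrakk>
         \<Longrightarrow> mul_el (mono u) (diagrel l i j) \<in> Jset n d"
| add: "\<lbrakk>a \<in> Jset n d; b \<in> Jset n d\<rbrakk> \<Longrightarrow> add_el a b \<in> Jset n d"
| smult: "a \<in> Jset n d \<Longrightarrow> smult_el c a \<in> Jset n d"

definition idx_lists :: "(nat \<Rightarrow> nat) \<Rightarrow> nat \<Rightarrow> nat \<Rightarrow> nat list set" where
  "idx_lists d l s = {is. length is = Suc s \<and> set is \<subseteq> {..<d l}}"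

definition bword :: "nat \<Rightarrow> nat \<Rightarrow> nat list \<Rightarrow> gen list" where
  "bword l s is = P l (is ! 0) # map (\<lambda>k. E l (is ! k) (is ! Suc k)) [0..<s] @ [Q l (is ! s)]"

definition bword' :: "nat \<Rightarrow> nat \<Rightarrow> nat list \<Rightarrow> gen list" where
  "bword' l s is = P l (is ! 0) # map (\<lambda>k. E' l (is ! k) (is ! Suc k)) [0..<s] @ [Q l (is ! s)]"

definition bgen :: "(nat \<Rightarrow> nat) \<Rightarrow> nat \<Rightarrow> nat \<Rightarrow> elt" where
  "bgen d l s = sum_el (\<lambda>is. mono (bword l s is)) (idx_lists d l s)"

definition bgen' :: "(nat \<Rightarrow> nat) \<Rightarrow> nat \<Rightarrow> nat \<Rightarrow> elt" where
  "bgen' d l s = smult_el ((-1) ^ s) (sum_el (\<lambda>is. mono (bword' l s is)) (idx_lists d l s))"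

text \<open>Coefficient of u^{-s-1} in the expansion of (u+c)^{-t-1} in powers of u^{-1}.\<close>
definition shift_coeff :: "complex \<Rightarrow> nat \<Rightarrow> nat \<Rightarrow> complex" where
  "shift_coeff c s t = (if t \<le> s then (- c) ^ (s - t) * of_nat (s choose t) else 0)"

end

theory Submission
  imports Defs
begin

text \<open>Write \<open>b'\<^sub>l\<^sub>,\<^sub>s = (-1)\<^sup>s \<Sum> p\<^sub>a (e'\<^sup>s)\<^sub>a\<^sub>b q\<^sub>b\<close>, where \<open>e'\<close> is the matrix of the
  generators \<open>e'\<^sub>l\<^sub>,\<^sub>i\<^sub>j\<close>. The \<open>q\<close>'s commute with the \<open>e'\<close>'s, so they can be moved next
  to the \<open>p\<close>'s. At the right end of a word, modulo the left ideal generated by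
  \<open>gl(V)\<^sub>d\<^sub>i\<^sub>a\<^sub>g\<close>, each \<open>e'\<^sub>i\<^sub>j\<close> may be replaced by \<open>-e\<^sub>i\<^sub>j\<close>; since \<open>e\<close> and \<open>e'\<close> commute,
  \<open>(e'\<^sup>s)\<^sub>a\<^sub>b\<close> becomes \<open>(-1)\<^sup>s ((e\<^sup>T)\<^sup>s)\<^sub>b\<^sub>a\<close> and the signs cancel. Moving the \<open>q\<close>'s back to
  the right through the \<open>e\<close>'s, each step contributes \<open>\<Sum>\<^sub>b [q\<^sub>b, e\<^sub>c\<^sub>b] = -d\<^sub>l q\<^sub>c\<close>, so the
  result is \<open>(e - d\<^sub>l)\<^sup>s\<close> applied to the vector \<open>q\<close>; its binomial expansion is
  \<open>\<Sum>\<^sub>t (s choose t) (-d\<^sub>l)\<^sup>s\<^sup>-\<^sup>t b\<^sub>l\<^sub>,\<^sub>t\<close>, the coefficient of \<open>u\<^sup>-\<^sup>s\<^sup>-\<^sup>1\<close> in \<open>b\<^sub>l(u+d\<^sub>l)\<close>.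
  Only the commutation relations and \<open>gl(V)\<^sub>d\<^sub>i\<^sub>a\<^sub>g\<close> are used, not \<open>R\<close>.\<close>

section \<open>The free algebra as a ring\<close>

lemma mul_el_assoc: "mul_el (mul_el f g) h = mul_el f (mul_el g h)"
proof (rule ext)
  fix w :: "gen list"
  define L where "L = length w"
  define F where "F = (\<lambda>j m. f (take j w) * g (take m (drop j w)) * h (drop m (drop j w)))"
  have "mul_el (mul_el f g) h w = (\<Sum>k\<le>L. \<Sum>j\<le>k. F j (k - j))"
    unfolding mul_el_def L_def F_def
    by (auto simp: sum_distrib_right min_def take_drop intro!: sum.cong)
  also have "\<dots> = (\<Sum>(j,m)\<in>{(j,m). j+m \<le> L}. F j m)"
    by (rule sum.triangle_reindex_eq[symmetric])
  also have "\<dots> = (\<Sum>j\<le>L. \<Sum>m\<le>L-j. F j m)"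
  proof -
    have "{(j,m). j+m \<le> L} = Sigma {..L} (\<lambda>j. {..L-j})" by auto
    then show ?thesis by (simp add: sum.Sigma)
  qed
  also have "\<dots> = mul_el f (mul_el g h) w"
    unfolding mul_el_def L_def F_def
    by (auto simp: sum_distrib_left mult.assoc intro!: sum.cong)
  finally show "mul_el (mul_el f g) h w = mul_el f (mul_el g h) w" .
qed

lemma mul_el_mono_Nil: "mul_el (mono []) f = f" "mul_el f (mono []) = f"
proof -
  show "mul_el (mono []) f = f"
    by (rule ext) (simp add: mul_el_def mono_def sum.atMost_shift)
  show "mul_el f (mono []) = f"
  proof (rule ext)
    fix w :: "gen list"
    have "mul_el f (mono []) w = (\<Sum>k\<in>{..length w}. if k = length w then f w else 0)"
      unfolding mul_el_def mono_def by (rule sum.cong) auto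
    then show "mul_el f (mono []) w = f w" by simp
  qed
qed

lemma mul_el_smult: "mul_el (smult_el c f) g = smult_el c (mul_el f g)"
   "mul_el f (smult_el c g) = smult_el c (mul_el f g)"
  by (auto simp: mul_el_def smult_el_def sum_distrib_left algebra_simps)

lemma mul_el_add: "mul_el f (add_el a b) = add_el (mul_el f a) (mul_el f b)"
  "mul_el (add_el a b) f = add_el (mul_el a f) (mul_el b f)"
  by (auto simp: mul_el_def add_el_def sum.distrib algebra_simps)

lemma mul_el_zero: "mul_el f zero_el = zero_el"
  by (auto simp: mul_el_def zero_el_def)

lemma mul_el_mono: "mul_el (mono u) (mono v) = mono (u @ v)"
proof (rule ext)
  fix w :: "gen list"
  have take_drop_eq: "(take k w = u \<and> drop k w = v) \<longleftrightarrow> (k = length u \<and> w = u @ v)"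
    if "k \<le> length w" for k
    using that by (auto simp: min_def)
  have "mul_el (mono u) (mono v) w = (\<Sum>k\<in>{..length w}. if k = length u \<and> w = u @ v then 1 else 0)"
    unfolding mul_el_def mono_def by (rule sum.cong) (use take_drop_eq in auto)
  also have "\<dots> = mono (u @ v) w"
    by (cases "w = u @ v") (auto simp: mono_def)
  finally show "mul_el (mono u) (mono v) w = mono (u @ v) w" .
qed

typedef free_alg = "UNIV :: elt set" by auto

instantiation free_alg :: ring_1
begin
definition "0 = Abs_free_alg zero_el"
definition "1 = Abs_free_alg (mono [])"
definition "x + y = Abs_free_alg (add_el (Rep_free_alg x) (Rep_free_alg y))"
definition "x - y = Abs_free_alg (sub_el (Rep_free_alg x) (Rep_free_alg y))"
definition "- x = Abs_free_alg (smult_el (-1) (Rep_free_alg x))"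
definition "x * y = Abs_free_alg (mul_el (Rep_free_alg x) (Rep_free_alg y))"

lemma Rep_free_alg_eqI: "(\<And>w. Rep_free_alg x w = Rep_free_alg y w) \<Longrightarrow> x = y"
  by (metis Rep_free_alg_inject ext)

instance
proof
  fix a b c :: free_alg
  note defs = zero_free_alg_def one_free_alg_def plus_free_alg_def minus_free_alg_def
    uminus_free_alg_def times_free_alg_def Abs_free_alg_inverse
    add_el_def sub_el_def smult_el_def zero_el_def
  show "a * b * c = a * (b * c)" by (simp add: defs mul_el_assoc)
  show "1 * a = a" "a * 1 = a" by (simp_all add: defs mul_el_mono_Nil Rep_free_alg_inverse)
  show "(a + b) * c = a * c + b * c" "a * (b + c) = a * b + a * c"
    by (simp_all add: defs mul_el_add[unfolded add_el_def])
  show "a + b + c = a + (b + c)" "a + b = b + a" "0 + a = a" "- a + a = 0" "a - b = a + - b"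
    by (rule Rep_free_alg_eqI; simp add: defs)+
  show "(0::free_alg) \<noteq> 1"
    by (metis Abs_free_alg_inverse UNIV_I defs(1,2) mono_def zero_el_def zero_neq_one)
qed
end

lemma Rep_free_alg_zero: "Rep_free_alg 0 = zero_el"
  by (simp add: zero_free_alg_def Abs_free_alg_inverse)
lemma Rep_free_alg_one: "Rep_free_alg 1 = mono []"
  by (simp add: one_free_alg_def Abs_free_alg_inverse)
lemma Rep_free_alg_add: "Rep_free_alg (x + y) = add_el (Rep_free_alg x) (Rep_free_alg y)"
  by (simp add: plus_free_alg_def Abs_free_alg_inverse)
lemma Rep_free_alg_diff: "Rep_free_alg (x - y) = sub_el (Rep_free_alg x) (Rep_free_alg y)"
  by (simp add: minus_free_alg_def Abs_free_alg_inverse)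
lemma Rep_free_alg_uminus: "Rep_free_alg (- x) = smult_el (-1) (Rep_free_alg x)"
  by (simp add: uminus_free_alg_def Abs_free_alg_inverse)
lemma Rep_free_alg_mult: "Rep_free_alg (x * y) = mul_el (Rep_free_alg x) (Rep_free_alg y)"
  by (simp add: times_free_alg_def Abs_free_alg_inverse)

lemma Rep_free_alg_sum: "Rep_free_alg (sum f A) = sum_el (\<lambda>a. Rep_free_alg (f a)) A"
proof (cases "finite A")
  case True then show ?thesis
    by (induction A rule: finite_induct)
       (auto simp: Rep_free_alg_zero Rep_free_alg_add sum_el_def zero_el_def add_el_def)
next
  case False then show ?thesis by (simp add: Rep_free_alg_zero sum_el_def zero_el_def)
qed

lemma Rep_free_alg_of_int_mult:
  "Rep_free_alg (of_int k * x) = smult_el (of_int k) (Rep_free_alg x)"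
proof -
  have of_nat: "Rep_free_alg (of_nat m) = smult_el (of_nat m) (mono [])" for m
    by (induction m) (auto simp: Rep_free_alg_zero Rep_free_alg_add Rep_free_alg_one
        smult_el_def zero_el_def add_el_def algebra_simps)
  have "Rep_free_alg (of_int k) = smult_el (of_int k) (mono [])"
  proof (cases "k \<ge> 0")
    case True
    then obtain m where "k = int m" by (metis nonneg_eq_int)
    then show ?thesis by (simp add: of_nat)
  next
    case False
    then obtain m where "k = - int m" by (metis le_cases neg_0_le_iff_le nonneg_eq_int minus_minus)
    then show ?thesis by (auto simp: of_nat Rep_free_alg_uminus smult_el_def)
  qed
  then show ?thesis by (simp add: Rep_free_alg_mult mul_el_smult mul_el_mono_Nil)
qed

definition word :: "gen list \<Rightarrow> free_alg" where "word u = Abs_free_alg (mono u)"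

definition letter :: "gen \<Rightarrow> free_alg" where "letter g = word [g]"

lemma Rep_free_alg_word: "Rep_free_alg (word u) = mono u"
  by (simp add: word_def Abs_free_alg_inverse)

lemma word_append: "word (u @ v) = word u * word v"
  by (simp add: word_def times_free_alg_def Abs_free_alg_inverse mul_el_mono)

lemma word_Nil: "word [] = 1"
  by (simp add: word_def one_free_alg_def)

lemma word_Cons: "word (x # xs) = letter x * word xs"
  using word_append[of "[x]" xs] by (simp add: letter_def)

lemma Abs_free_alg_sum_el_mono: "Abs_free_alg (sum_el (\<lambda>x. mono (f x)) A) = (\<Sum>x\<in>A. word (f x))"
proof -
  have "Rep_free_alg (\<Sum>x\<in>A. word (f x)) = sum_el (\<lambda>x. mono (f x)) A"
    by (simp add: Rep_free_alg_sum Rep_free_alg_word)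
  then show ?thesis by (metis Rep_free_alg_inverse)
qed

section \<open>Vanishing modulo the relations\<close>

inductive_set valid_span :: "nat \<Rightarrow> (nat \<Rightarrow> nat) \<Rightarrow> free_alg set" for n d where
  word: "list_all (valid_gen n d) u \<Longrightarrow> word u \<in> valid_span n d"
| add: "x \<in> valid_span n d \<Longrightarrow> y \<in> valid_span n d \<Longrightarrow> x + y \<in> valid_span n d"
| uminus: "x \<in> valid_span n d \<Longrightarrow> - x \<in> valid_span n d"

lemma valid_span_one: "1 \<in> valid_span n d"
  using valid_span.word[of n d "[]"] by (simp add: word_Nil)

lemma valid_span_letter: "valid_gen n d g \<Longrightarrow> letter g \<in> valid_span n d"
  unfolding letter_def by (rule valid_span.word) simp

lemma valid_span_diff: "x \<in> valid_span n d \<Longrightarrow> y \<in> valid_span n d \<Longrightarrow> x - y \<in> valid_span n d"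
  by (metis diff_conv_add_uminus valid_span.add valid_span.uminus)

lemma valid_span_mult:
  assumes "x \<in> valid_span n d" and "y \<in> valid_span n d"
  shows "x * y \<in> valid_span n d"
  using assms
proof (induction x rule: valid_span.induct)
  case (word u)
  from word.prems show ?case
  proof (induction y rule: valid_span.induct)
    case (word v)
    then show ?case using \<open>list_all (valid_gen n d) u\<close> valid_span.word[of n d "u @ v"]
      by (simp add: word_append)
  qed (simp_all add: distrib_left valid_span.add valid_span.uminus)
qed (simp_all add: distrib_right valid_span.add valid_span.uminus)

lemma valid_span_zero: "0 \<in> valid_span n d"
  using valid_span_diff[OF valid_span_one valid_span_one] by simp

lemma valid_span_sum: "(\<And>a. a \<in> A \<Longrightarrow> f a \<in> valid_span n d) \<Longrightarrow> sum f A \<in> valid_span n d"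
  by (induction A rule: infinite_finite_induct) (auto intro: valid_span.add valid_span_zero)

lemma valid_span_of_nat_mult: "x \<in> valid_span n d \<Longrightarrow> of_nat k * x \<in> valid_span n d"
  by (induction k) (auto simp: distrib_right intro: valid_span.add valid_span_zero)

lemma valid_span_of_nat: "of_nat k \<in> valid_span n d"
  using valid_span_of_nat_mult[OF valid_span_one] by simp

abbreviation vanishes :: "nat \<Rightarrow> (nat \<Rightarrow> nat) \<Rightarrow> free_alg \<Rightarrow> bool" where
  "vanishes n d x \<equiv> Rep_free_alg x \<in> Jset n d"

lemma vanishes_add: "vanishes n d x \<Longrightarrow> vanishes n d y \<Longrightarrow> vanishes n d (x + y)"
  by (simp add: Rep_free_alg_add Jset.add)

lemma vanishes_uminus: "vanishes n d x \<Longrightarrow> vanishes n d (- x)"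
  by (simp add: Rep_free_alg_uminus Jset.smult)

lemma vanishes_diff: "vanishes n d x \<Longrightarrow> vanishes n d y \<Longrightarrow> vanishes n d (x - y)"
  by (metis diff_conv_add_uminus vanishes_add vanishes_uminus)

lemma vanishes_sum: "(\<And>a. a \<in> A \<Longrightarrow> vanishes n d (f a)) \<Longrightarrow> vanishes n d (sum f A)"
  by (induction A rule: infinite_finite_induct)
     (auto simp: Rep_free_alg_zero Jset.zero intro: vanishes_add)

lemma vanishes_of_int_mult: "vanishes n d x \<Longrightarrow> vanishes n d (of_int k * x)"
  by (simp add: Rep_free_alg_of_int_mult Jset.smult)

lemma vanishes_minus_one_power_mult: "vanishes n d x \<Longrightarrow> vanishes n d ((-1) ^ s * x)"
  using vanishes_of_int_mult[where k = "(-1) ^ s"] by simp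

lemma Jset_mul_el_mono_left:
  "a \<in> Jset n d \<Longrightarrow> list_all (valid_gen n d) w \<Longrightarrow> mul_el (mono w) a \<in> Jset n d"
proof (induction a rule: Jset.induct)
  case zero then show ?case by (simp add: mul_el_zero Jset.zero)
next
  case (comm u v x y)
  then show ?case using Jset.comm[of n d "w @ u" v x y]
    by (simp add: mul_el_assoc[symmetric] mul_el_mono)
next
  case (rel u l i j)
  then show ?case using Jset.rel[of n d "w @ u" l i j]
    by (simp add: mul_el_assoc[symmetric] mul_el_mono)
next
  case (diag u l i j)
  then show ?case using Jset.diag[of n d "w @ u" l i j]
    by (simp add: mul_el_assoc[symmetric] mul_el_mono)
qed (simp_all add: mul_el_add mul_el_smult Jset.add Jset.smult)

lemma vanishes_mult_left: "x \<in> valid_span n d \<Longrightarrow> vanishes n d y \<Longrightarrow> vanishes n d (x * y)"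
  by (induction x rule: valid_span.induct)
     (simp_all add: Rep_free_alg_mult Rep_free_alg_word Jset_mul_el_mono_left distrib_right
       vanishes_add vanishes_uminus)

lemma vanishes_commrel:
  assumes "x \<in> valid_span n d" and "y \<in> valid_span n d"
    and "valid_gen n d g" and "valid_gen n d h"
  shows "vanishes n d (x * Abs_free_alg (commrel n g h) * y)"
  using assms(1,2)
proof (induction x rule: valid_span.induct)
  case (word u)
  from word.prems show ?case
  proof (induction y rule: valid_span.induct)
    case (word v)
    then show ?case using \<open>list_all (valid_gen n d) u\<close> Jset.comm[OF _ _ assms(3,4)]
      by (simp add: Rep_free_alg_mult Rep_free_alg_word Abs_free_alg_inverse)
  qed (simp_all add: distrib_left vanishes_add vanishes_uminus)
qed (simp_all add: distrib_right vanishes_add vanishes_uminus)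

lemma vanishes_diag:
  assumes "x \<in> valid_span n d" and "l < n" and "i < d l" and "j < d l"
  shows "vanishes n d (x * (letter (E l i j) + letter (E' l i j)))"
proof -
  have "letter (E l i j) + letter (E' l i j) = Abs_free_alg (diagrel l i j)"
    by (simp add: diagrel_def letter_def word_def plus_free_alg_def Abs_free_alg_inverse)
  moreover have "diagrel l i j \<in> Jset n d"
    using Jset.diag[of n d "[]" l i j] assms(2-4) by (simp add: mul_el_mono_Nil)
  ultimately show ?thesis
    using vanishes_mult_left[OF assms(1)] by (simp add: Abs_free_alg_inverse)
qed

text \<open>Congruence modulo the two-sided ideal of the commutation relations. \<open>Jset\<close> also contains
  a left ideal and is not two-sided, so instead of passing to a quotient ring the difference is
  required to vanish after multiplication by valid elements on both sides.\<close>
definition tcong :: "nat \<Rightarrow> (nat \<Rightarrow> nat) \<Rightarrow> free_alg \<Rightarrow> free_alg \<Rightarrow> bool" where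
  "tcong n d a b \<longleftrightarrow> (\<forall>x\<in>valid_span n d. \<forall>y\<in>valid_span n d. vanishes n d (x * (a - b) * y))"

lemma tcong_refl: "tcong n d a a"
  by (simp add: tcong_def Rep_free_alg_zero Jset.zero)

lemma tcong_uminus: "tcong n d a b \<Longrightarrow> tcong n d (- a) (- b)"
  unfolding tcong_def
proof (intro ballI)
  fix x y assume "\<forall>x\<in>valid_span n d. \<forall>y\<in>valid_span n d. vanishes n d (x * (a - b) * y)"
    "x \<in> valid_span n d" "y \<in> valid_span n d"
  then have "vanishes n d (- (x * (a - b) * y))" by (simp add: vanishes_uminus)
  then show "vanishes n d (x * (- a - - b) * y)" by (simp add: algebra_simps)
qed

lemma tcong_add: "tcong n d a b \<Longrightarrow> tcong n d c e \<Longrightarrow> tcong n d (a + c) (b + e)"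
  unfolding tcong_def
proof (intro ballI)
  fix x y assume "\<forall>x\<in>valid_span n d. \<forall>y\<in>valid_span n d. vanishes n d (x * (a - b) * y)"
    "\<forall>x\<in>valid_span n d. \<forall>y\<in>valid_span n d. vanishes n d (x * (c - e) * y)"
    "x \<in> valid_span n d" "y \<in> valid_span n d"
  then have "vanishes n d (x * (a - b) * y + x * (c - e) * y)" by (simp add: vanishes_add)
  moreover have "x * (a - b) * y + x * (c - e) * y = x * ((a + c) - (b + e)) * y"
    by (simp add: algebra_simps)
  ultimately show "vanishes n d (x * ((a + c) - (b + e)) * y)" by simp
qed

lemma tcong_trans: "tcong n d a b \<Longrightarrow> tcong n d b c \<Longrightarrow> tcong n d a c"
  using tcong_add[OF tcong_add tcong_refl, of n d a b b c "- b"] by simp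

lemma tcong_sym: "tcong n d a b \<Longrightarrow> tcong n d b a"
  using tcong_add[OF tcong_uminus tcong_refl, of n d a b "a + b"] by simp

lemma tcong_diff: "tcong n d a b \<Longrightarrow> tcong n d c e \<Longrightarrow> tcong n d (a - c) (b - e)"
  using tcong_add[of n d a b "- c" "- e"] tcong_uminus[of n d c e] by simp

lemma tcong_sum: "(\<And>a. a \<in> A \<Longrightarrow> tcong n d (f a) (g a)) \<Longrightarrow> tcong n d (sum f A) (sum g A)"
  by (induction A rule: infinite_finite_induct) (auto intro: tcong_add tcong_refl)

lemma tcong_mult_left: "z \<in> valid_span n d \<Longrightarrow> tcong n d a b \<Longrightarrow> tcong n d (z * a) (z * b)"
  unfolding tcong_def
proof (intro ballI)
  fix x y assume "z \<in> valid_span n d" "x \<in> valid_span n d" "y \<in> valid_span n d"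
    "\<forall>x\<in>valid_span n d. \<forall>y\<in>valid_span n d. vanishes n d (x * (a - b) * y)"
  then have "vanishes n d ((x * z) * (a - b) * y)" by (simp add: valid_span_mult)
  then show "vanishes n d (x * (z * a - z * b) * y)" by (simp add: algebra_simps)
qed

lemma tcong_mult_right: "z \<in> valid_span n d \<Longrightarrow> tcong n d a b \<Longrightarrow> tcong n d (a * z) (b * z)"
  unfolding tcong_def
proof (intro ballI)
  fix x y assume "z \<in> valid_span n d" "x \<in> valid_span n d" "y \<in> valid_span n d"
    "\<forall>x\<in>valid_span n d. \<forall>y\<in>valid_span n d. vanishes n d (x * (a - b) * y)"
  then have "vanishes n d (x * (a - b) * (z * y))" by (simp add: valid_span_mult)
  then show "vanishes n d (x * (a * z - b * z) * y)" by (simp add: algebra_simps)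
qed

lemma vanishes_if_tcong: "tcong n d a b \<Longrightarrow> x \<in> valid_span n d \<Longrightarrow> vanishes n d (x * (a - b))"
  unfolding tcong_def using valid_span_one by fastforce

lemma tcong_bracket:
  assumes "valid_gen n d g" and "valid_gen n d h"
  shows "tcong n d (letter g * letter h) (letter h * letter g + Abs_free_alg (bra n g h))"
proof -
  have "Abs_free_alg (commrel n g h) = letter g * letter h - (letter h * letter g + Abs_free_alg (bra n g h))"
    by (simp add: commrel_def letter_def word_def minus_free_alg_def times_free_alg_def
        plus_free_alg_def Abs_free_alg_inverse add_el_def sub_el_def algebra_simps)
  then show ?thesis
    unfolding tcong_def using vanishes_commrel[OF _ _ assms] by simp
qed

lemma Abs_free_alg_sub_el: "Abs_free_alg (sub_el a b) = Abs_free_alg a - Abs_free_alg b"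
  by (simp add: minus_free_alg_def Abs_free_alg_inverse)

lemma Abs_free_alg_zero_el: "Abs_free_alg zero_el = 0"
  by (simp add: zero_free_alg_def)

lemma Abs_free_alg_smult_kd: "Abs_free_alg (smult_el (kd a b) (gn g)) = (if a = b then letter g else 0)"
  by (auto simp: kd_def smult_el_def letter_def word_def zero_free_alg_def zero_el_def)

section \<open>Matrix powers and paths of indices\<close>

primrec mat_pow :: "nat \<Rightarrow> (nat \<Rightarrow> nat \<Rightarrow> 'a::semiring_1) \<Rightarrow> nat \<Rightarrow> nat \<Rightarrow> nat \<Rightarrow> 'a" where
  "mat_pow D g 0 a b = of_bool (a = b)"
| "mat_pow D g (Suc s) a b = (\<Sum>c<D. g a c * mat_pow D g s c b)"

lemma mat_pow_Suc_right:
  assumes "a < D" and "b < D"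
  shows "mat_pow D g (Suc s) a b = (\<Sum>c<D. mat_pow D g s a c * g c b)"
  using assms(1)
proof (induction s arbitrary: a)
  case 0
  have "{..<D} \<inter> {c. c = b} = {b}" "{..<D} \<inter> {c. a = c} = {a}"
    using assms(2) 0 by auto
  then show ?case by simp
next
  case (Suc s)
  have "mat_pow D g (Suc (Suc s)) a b = (\<Sum>c<D. \<Sum>m<D. g a c * mat_pow D g s c m * g m b)"
    using Suc.IH by (simp add: sum_distrib_left mult.assoc)
  also have "\<dots> = (\<Sum>m<D. (\<Sum>c<D. g a c * mat_pow D g s c m) * g m b)"
    by (subst sum.swap) (simp add: sum_distrib_right)
  finally show ?case by simp
qed

lemma mat_pow_mult_vector:
  "(\<Sum>b<D. mat_pow D g (Suc t) a b * v b) = (\<Sum>c<D. g a c * (\<Sum>b<D. mat_pow D g t c b * v b))"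
proof -
  have "(\<Sum>b<D. mat_pow D g (Suc t) a b * v b) = (\<Sum>b<D. \<Sum>c<D. g a c * mat_pow D g t c b * v b)"
    by (simp add: sum_distrib_right)
  also have "\<dots> = (\<Sum>c<D. \<Sum>b<D. g a c * mat_pow D g t c b * v b)"
    by (rule sum.swap)
  finally show ?thesis by (simp add: sum_distrib_left mult.assoc)
qed

lemma valid_span_mat_pow: "(\<And>i j. g i j \<in> valid_span n d) \<Longrightarrow> mat_pow D g s a b \<in> valid_span n d"
  by (induction s arbitrary: a)
     (auto intro!: valid_span_sum valid_span_mult valid_span_one valid_span_zero)

lemma tcong_commute_mat_pow:
  assumes z: "z \<in> valid_span n d" and g: "\<And>i j. g i j \<in> valid_span n d"
    and commute: "\<And>i j. i < D \<Longrightarrow> j < D \<Longrightarrow> tcong n d (z * g i j) (g i j * z)"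
  shows "a < D \<Longrightarrow> tcong n d (z * mat_pow D g s a b) (mat_pow D g s a b * z)"
proof (induction s arbitrary: a)
  case 0 then show ?case by (simp add: tcong_refl)
next
  case (Suc s)
  have "tcong n d (z * g a c * mat_pow D g s c b) (g a c * mat_pow D g s c b * z)" if "c < D" for c
  proof -
    have "tcong n d (z * g a c * mat_pow D g s c b) (g a c * z * mat_pow D g s c b)"
      by (rule tcong_mult_right[OF valid_span_mat_pow[OF g] commute[OF Suc.prems that]])
    moreover have "tcong n d (g a c * z * mat_pow D g s c b) (g a c * mat_pow D g s c b * z)"
      using tcong_mult_left[OF g Suc.IH[OF that], of a c] by (simp add: mult.assoc)
    ultimately show ?thesis by (rule tcong_trans)
  qed
  then have "tcong n d (\<Sum>c<D. z * g a c * mat_pow D g s c b) (\<Sum>c<D. g a c * mat_pow D g s c b * z)"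
    by (intro tcong_sum) simp
  then show ?case by (simp add: sum_distrib_left sum_distrib_right mult.assoc)
qed

lemma sum_lists_length_Suc:
  "(\<Sum>xs\<in>{xs. set xs \<subseteq> A \<and> length xs = Suc t}. f xs)
     = (\<Sum>c\<in>A. \<Sum>js\<in>{xs. set xs \<subseteq> A \<and> length xs = t}. f (c # js))"
proof -
  let ?L = "{xs. set xs \<subseteq> A \<and> length xs = t}"
  have "inj_on (\<lambda>(js, c). c # js) (?L \<times> A)" by (auto simp: inj_on_def)
  then have "(\<Sum>xs\<in>{xs. set xs \<subseteq> A \<and> length xs = Suc t}. f xs) = (\<Sum>(js, c)\<in>?L \<times> A. f (c # js))"
    unfolding lists_length_Suc_eq by (subst sum.reindex) (auto simp: case_prod_unfold)
  also have "\<dots> = (\<Sum>js\<in>?L. \<Sum>c\<in>A. f (c # js))"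
    by (rule sum.cartesian_product[symmetric])
  also have "\<dots> = (\<Sum>c\<in>A. \<Sum>js\<in>?L. f (c # js))"
    by (rule sum.swap)
  finally show ?thesis .
qed

definition path_word :: "(nat \<Rightarrow> nat \<Rightarrow> nat \<Rightarrow> gen) \<Rightarrow> nat \<Rightarrow> nat list \<Rightarrow> gen list" where
  "path_word C l xs =
     map (\<lambda>k. C l (xs ! k) (xs ! Suc k)) [0..<length xs - 1] @ [Q l (xs ! (length xs - 1))]"

lemma path_word_single: "path_word C l [a] = [Q l a]"
  by (simp add: path_word_def)

lemma path_word_Cons_Cons: "path_word C l (a # b # js) = C l a b # path_word C l (b # js)"
proof -
  have "[0..<Suc (length js)] = 0 # map Suc [0..<length js]"
    by (simp add: upt_conv_Cons map_Suc_upt del: upt_Suc)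
  then show ?thesis by (simp add: path_word_def comp_def del: upt_Suc)
qed

lemma bword_Cons: "length js = t \<Longrightarrow> bword l t (a # js) = P l a # path_word E l (a # js)"
  by (simp add: bword_def path_word_def)

lemma bword'_Cons: "length js = t \<Longrightarrow> bword' l t (a # js) = P l a # path_word E' l (a # js)"
  by (simp add: bword'_def path_word_def)

lemma of_int_mult_left_commute: "of_int k * (x * y) = x * (of_int k * (y :: 'a :: ring_1))"
  by (metis mult.assoc mult_of_int_commute)

definition shift_coeff_int :: "nat \<Rightarrow> nat \<Rightarrow> nat \<Rightarrow> int" where
  "shift_coeff_int D s t = (- int D) ^ (s - t) * int (s choose t)"

lemma of_int_shift_coeff_int: "of_int (shift_coeff_int D s t) = shift_coeff (of_nat D) s t"
  by (simp add: shift_coeff_int_def shift_coeff_def binomial_eq_0)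

lemma shift_coeff_int_Suc:
  "shift_coeff_int D (Suc s) t = (if t = 0 then 0 else shift_coeff_int D s (t - 1)) - int D * shift_coeff_int D s t"
proof (cases t)
  case 0 then show ?thesis by (simp add: shift_coeff_int_def)
next
  case (Suc t')
  show ?thesis
  proof (cases "t' < s")
    case True
    then have "Suc s - Suc t' = Suc (s - Suc t')" "s - t' = Suc (s - Suc t')" by auto
    then show ?thesis using Suc by (simp add: shift_coeff_int_def algebra_simps)
  next
    case False
    then show ?thesis using Suc by (cases "t' = s") (simp_all add: shift_coeff_int_def binomial_eq_0)
  qed
qed

section \<open>The generators at a vertex\<close>

locale vertex =
  fixes n :: nat and d :: "nat \<Rightarrow> nat" and l :: nat
  assumes l_less: "l < n"
begin

abbreviation D :: nat where "D \<equiv> d l"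

definition e :: "nat \<Rightarrow> nat \<Rightarrow> free_alg" where
  "e i j = (if i < D \<and> j < D then letter (E l i j) else 0)"
definition e' :: "nat \<Rightarrow> nat \<Rightarrow> free_alg" where
  "e' i j = (if i < D \<and> j < D then letter (E' l i j) else 0)"
definition q :: "nat \<Rightarrow> free_alg" where "q c = (if c < D then letter (Q l c) else 0)"
definition p :: "nat \<Rightarrow> free_alg" where "p c = (if c < D then letter (P l c) else 0)"

lemma valid_span_e: "e i j \<in> valid_span n d"
  by (simp add: e_def l_less valid_span_letter valid_span_zero)
lemma valid_span_e': "e' i j \<in> valid_span n d"
  by (simp add: e'_def l_less valid_span_letter valid_span_zero)
lemma valid_span_q: "q i \<in> valid_span n d"
  by (simp add: q_def l_less valid_span_letter valid_span_zero)
lemma valid_span_p: "p i \<in> valid_span n d"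
  by (simp add: p_def l_less valid_span_letter valid_span_zero)

lemma e_q_bracket:
  assumes "i < D" and "j < D" and "c < D"
  shows "tcong n d (e i j * q c) (q c * e i j + (if j = c then q i else 0))"
proof -
  have "Abs_free_alg (bra n (E l i j) (Q l c)) = (if j = c then q i else 0)"
    using assms by (simp add: Abs_free_alg_smult_kd q_def)
  then show ?thesis
    using tcong_bracket[of n d "E l i j" "Q l c"] l_less assms by (simp add: e_def q_def)
qed

lemma e_e_bracket:
  assumes "i < D" and "j < D" and "c < D" and "m < D"
  shows "tcong n d (e i j * e c m)
    (e c m * e i j + ((if j = c then e i m else 0) - (if i = m then e c j else 0)))"
proof -
  have "Abs_free_alg (bra n (E l i j) (E l c m))
      = (if j = c then e i m else 0) - (if i = m then e c j else 0)"
    using assms by (simp add: Abs_free_alg_sub_el Abs_free_alg_smult_kd e_def)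
  then show ?thesis
    using tcong_bracket[of n d "E l i j" "E l c m"] l_less assms by (simp add: e_def)
qed

lemma e_e'_commute: "tcong n d (e i j * e' c m) (e' c m * e i j)"
  using tcong_bracket[of n d "E l i j" "E' l c m"] l_less
  by (auto simp: e_def e'_def Abs_free_alg_zero_el tcong_refl)

lemma q_e'_commute: "tcong n d (q c * e' i j) (e' i j * q c)"
  using tcong_bracket[of n d "E' l i j" "Q l c"] l_less
  by (auto simp: e'_def q_def Abs_free_alg_zero_el tcong_refl intro: tcong_sym)

lemma q_commute_e'_pow: "a < D \<Longrightarrow> tcong n d (q c * mat_pow D e' s a b) (mat_pow D e' s a b * q c)"
  by (rule tcong_commute_mat_pow[OF valid_span_q valid_span_e' q_e'_commute])

lemma e_commute_e'_pow: "a < D \<Longrightarrow> tcong n d (e i j * mat_pow D e' s a b) (mat_pow D e' s a b * e i j)"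
  by (rule tcong_commute_mat_pow[OF valid_span_e valid_span_e' e_e'_commute])

text \<open>At the right end of a word \<open>e'\<^sub>c\<^sub>b\<close> acts as \<open>-e\<^sub>c\<^sub>b\<close>; moving the \<open>e'\<close>'s out
  one at a time from the right reverses their order, which transposes the matrix.\<close>
lemma vanishes_e'_pow_right_end:
  assumes "a < D" and "b < D" and "x \<in> valid_span n d"
  shows "vanishes n d (x * mat_pow D e' s a b - (-1) ^ s * (x * mat_pow D (\<lambda>i j. e j i) s b a))"
  using assms(2,3)
proof (induction s arbitrary: x b)
  case 0 then show ?case by (simp add: Rep_free_alg_zero Jset.zero)
next
  case (Suc s)
  let ?M = "\<lambda>c. mat_pow D e' s a c" and ?T = "\<lambda>c. mat_pow D (\<lambda>i j. e j i) s c a"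
  have "vanishes n d (x * (?M c * e' c b) - (-1) ^ Suc s * (x * (e c b * ?T c)))"
    if c: "c < D" for c
  proof -
    have M: "?M c \<in> valid_span n d" by (rule valid_span_mat_pow[OF valid_span_e'])
    have diag: "vanishes n d ((x * ?M c) * (e c b + e' c b))"
      using vanishes_diag[OF valid_span_mult[OF Suc.prems(2) M] l_less] c Suc.prems(1)
      by (simp add: e_def e'_def)
    have commute: "vanishes n d (x * (e c b * ?M c - ?M c * e c b))"
      by (rule vanishes_if_tcong[OF e_commute_e'_pow[OF assms(1)] Suc.prems(2)])
    have IH: "vanishes n d ((x * e c b) * ?M c - (-1) ^ s * ((x * e c b) * ?T c))"
      by (rule Suc.IH[OF c valid_span_mult[OF Suc.prems(2) valid_span_e]])
    have "vanishes n d ((x * ?M c) * (e c b + e' c b) + x * (e c b * ?M c - ?M c * e c b)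
        - ((x * e c b) * ?M c - (-1) ^ s * ((x * e c b) * ?T c)))"
      by (intro vanishes_diff vanishes_add diag commute IH)
    then show ?thesis by (simp add: algebra_simps)
  qed
  then have "vanishes n d (\<Sum>c<D. x * (?M c * e' c b) - (-1) ^ Suc s * (x * (e c b * ?T c)))"
    by (intro vanishes_sum) simp
  moreover have "(\<Sum>c<D. x * (?M c * e' c b) - (-1) ^ Suc s * (x * (e c b * ?T c)))
      = x * mat_pow D e' (Suc s) a b - (-1) ^ Suc s * (x * mat_pow D (\<lambda>i j. e j i) (Suc s) b a)"
    unfolding mat_pow_Suc_right[OF assms(1) Suc.prems(1)] mat_pow.simps(2)[of D "\<lambda>i j. e j i"]
    by (simp only: sum_subtractf sum_distrib_left)
  ultimately show ?case by simp
qed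

definition covariant :: "(nat \<Rightarrow> free_alg) \<Rightarrow> bool" where
  "covariant w \<longleftrightarrow> (\<forall>c. w c \<in> valid_span n d) \<and>
     (\<forall>i j c. i < D \<longrightarrow> j < D \<longrightarrow> c < D \<longrightarrow>
        tcong n d (e i j * w c) (w c * e i j + (if j = c then w i else 0)))"

definition act :: "(nat \<Rightarrow> free_alg) \<Rightarrow> nat \<Rightarrow> free_alg" where
  "act w c = (\<Sum>m<D. e c m * w m)"

definition shifted_act :: "(nat \<Rightarrow> free_alg) \<Rightarrow> nat \<Rightarrow> free_alg" where
  "shifted_act w c = act w c - of_nat D * w c"

lemma covariant_q: "covariant q"
  unfolding covariant_def using valid_span_q e_q_bracket by blast

lemma covariant_act:
  assumes "covariant w"
  shows "covariant (act w)"
proof -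
  have valid: "\<And>c. w c \<in> valid_span n d"
    and bracket: "\<And>i j c. i < D \<Longrightarrow> j < D \<Longrightarrow> c < D \<Longrightarrow>
        tcong n d (e i j * w c) (w c * e i j + (if j = c then w i else 0))"
    using assms unfolding covariant_def by auto
  have "tcong n d (e i j * act w c) (act w c * e i j + (if j = c then act w i else 0))"
    if ij: "i < D" "j < D" "c < D" for i j c
  proof -
    define R where "R m = e c m * w m * e i j + (if j = m then e c m * w i else 0)
        + (if j = c then e i m * w m else 0) - (if i = m then e c j * w m else 0)" for m
    have "tcong n d (e i j * e c m * w m) (R m)" if m: "m < D" for m
    proof -
      let ?br = "(if j = c then e i m else 0) - (if i = m then e c j else 0)"
      have "tcong n d (e i j * e c m * w m) ((e c m * e i j + ?br) * w m)"
        by (rule tcong_mult_right[OF valid e_e_bracket[OF ij m]])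
      moreover have "tcong n d (e c m * (e i j * w m) + ?br * w m)
          (e c m * (w m * e i j + (if j = m then w i else 0)) + ?br * w m)"
        by (rule tcong_add[OF tcong_mult_left[OF valid_span_e bracket[OF ij(1,2) m]] tcong_refl])
      moreover have "e c m * (w m * e i j + (if j = m then w i else 0)) + ?br * w m = R m"
        unfolding R_def by (simp add: distrib_left left_diff_distrib mult.assoc)
      moreover have "(e c m * e i j + ?br) * w m = e c m * (e i j * w m) + ?br * w m"
        by (simp add: distrib_right mult.assoc)
      ultimately show ?thesis by (metis tcong_trans)
    qed
    then have "tcong n d (\<Sum>m<D. e i j * e c m * w m) (\<Sum>m<D. R m)"
      by (intro tcong_sum) simp
    moreover have "(\<Sum>m<D. R m) = act w c * e i j + (if j = c then act w i else 0)"
      using ij by (simp add: R_def act_def sum.distrib sum_subtractf sum_distrib_right)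
    ultimately show ?thesis by (simp add: act_def sum_distrib_left mult.assoc)
  qed
  moreover have "act w c \<in> valid_span n d" for c
    unfolding act_def by (intro valid_span_sum valid_span_mult valid_span_e valid)
  ultimately show ?thesis unfolding covariant_def by blast
qed

lemma covariant_shifted_act:
  assumes "covariant w"
  shows "covariant (shifted_act w)"
proof -
  have valid: "\<And>c. w c \<in> valid_span n d"
    and bracket: "\<And>i j c. i < D \<Longrightarrow> j < D \<Longrightarrow> c < D \<Longrightarrow>
        tcong n d (e i j * w c) (w c * e i j + (if j = c then w i else 0))"
    using assms unfolding covariant_def by auto
  have act_valid: "\<And>c. act w c \<in> valid_span n d"
    and act_bracket: "\<And>i j c. i < D \<Longrightarrow> j < D \<Longrightarrow> c < D \<Longrightarrow>
        tcong n d (e i j * act w c) (act w c * e i j + (if j = c then act w i else 0))"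
    using covariant_act[OF assms] unfolding covariant_def by auto
  have "tcong n d (e i j * shifted_act w c) (shifted_act w c * e i j + (if j = c then shifted_act w i else 0))"
    if "i < D" "j < D" "c < D" for i j c
  proof -
    have "tcong n d (e i j * act w c - of_nat D * (e i j * w c))
        (act w c * e i j + (if j = c then act w i else 0) - of_nat D * (w c * e i j + (if j = c then w i else 0)))"
      by (intro tcong_diff act_bracket tcong_mult_left[OF valid_span_of_nat]
          bracket that)
    then show ?thesis
      unfolding shifted_act_def by (cases "j = c") (simp_all add: algebra_simps mult_of_nat_commute)
  qed
  moreover have "shifted_act w c \<in> valid_span n d" for c
    unfolding shifted_act_def by (intro valid_span_diff act_valid valid_span_of_nat_mult valid)
  ultimately show ?thesis unfolding covariant_def by blast
qed

text \<open>Each of the \<open>D\<close> commutators \<open>[w\<^sub>c, e\<^sub>c\<^sub>'\<^sub>c]\<close> equals \<open>-w\<^sub>c\<^sub>'\<close>.\<close>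
lemma tcong_covariant_contract:
  assumes "covariant w" and "c' < D"
  shows "tcong n d (\<Sum>c<D. w c * e c' c) (shifted_act w c')"
proof -
  have "tcong n d (w c * e c' c) (e c' c * w c - w c')" if c: "c < D" for c
  proof -
    have "tcong n d (e c' c * w c) (w c * e c' c + (if c = c then w c' else 0))"
      using assms c unfolding covariant_def by blast
    then have "tcong n d (e c' c * w c) (w c * e c' c + w c')" by simp
    from tcong_diff[OF tcong_sym[OF this] tcong_refl, of "w c'"] show ?thesis by simp
  qed
  then have "tcong n d (\<Sum>c<D. w c * e c' c) (\<Sum>c<D. e c' c * w c - w c')"
    by (intro tcong_sum) simp
  then show ?thesis by (simp add: shifted_act_def act_def sum_subtractf)
qed

lemma tcong_covariant_transpose_pow:
  assumes "covariant w" and "a < D"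
  shows "tcong n d (\<Sum>c<D. w c * mat_pow D (\<lambda>i j. e j i) s c a) ((shifted_act ^^ s) w a)"
  using assms(1)
proof (induction s arbitrary: w)
  case 0
  have "{..<D} \<inter> {c. c = a} = {a}" using assms(2) by auto
  then show ?case by (simp add: tcong_refl)
next
  case (Suc s)
  let ?T = "\<lambda>c'. mat_pow D (\<lambda>i j. e j i) s c' a"
  have "(\<Sum>c<D. w c * mat_pow D (\<lambda>i j. e j i) (Suc s) c a) = (\<Sum>c<D. \<Sum>c'<D. w c * e c' c * ?T c')"
    by (simp add: sum_distrib_left mult.assoc)
  also have "\<dots> = (\<Sum>c'<D. (\<Sum>c<D. w c * e c' c) * ?T c')"
    by (subst sum.swap) (simp add: sum_distrib_right)
  finally have split: "(\<Sum>c<D. w c * mat_pow D (\<lambda>i j. e j i) (Suc s) c a)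
      = (\<Sum>c'<D. (\<Sum>c<D. w c * e c' c) * ?T c')" .
  have "tcong n d (\<Sum>c'<D. (\<Sum>c<D. w c * e c' c) * ?T c') (\<Sum>c'<D. shifted_act w c' * ?T c')"
    by (intro tcong_sum tcong_mult_right[OF valid_span_mat_pow[OF valid_span_e]]
        tcong_covariant_contract[OF Suc.prems]) simp
  moreover have "tcong n d (\<Sum>c'<D. shifted_act w c' * ?T c') ((shifted_act ^^ s) (shifted_act w) a)"
    by (rule Suc.IH[OF covariant_shifted_act[OF Suc.prems]])
  ultimately show ?case
    unfolding split by (simp add: funpow_Suc_right del: funpow.simps) (rule tcong_trans)
qed

lemma act_sum_of_int_mult:
  "act (\<lambda>c. \<Sum>t\<in>A. of_int (k t) * U t c) a = (\<Sum>t\<in>A. of_int (k t) * act (U t) a)"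
proof -
  have "act (\<lambda>c. \<Sum>t\<in>A. of_int (k t) * U t c) a = (\<Sum>m<D. \<Sum>t\<in>A. of_int (k t) * (e a m * U t m))"
    unfolding act_def by (simp add: sum_distrib_left mult.assoc mult_of_int_commute)
  also have "\<dots> = (\<Sum>t\<in>A. of_int (k t) * act (U t) a)"
    by (subst sum.swap) (simp add: act_def sum_distrib_left)
  finally show ?thesis .
qed

lemma shifted_act_pow_binomial:
  "(shifted_act ^^ s) w a = (\<Sum>t\<le>s. of_int (shift_coeff_int D s t) * (act ^^ t) w a)"
proof (induction s arbitrary: a)
  case 0 then show ?case by (simp add: shift_coeff_int_def)
next
  case (Suc s)
  define U where "U t = (act ^^ t) w" for t
  define k where "k t = shift_coeff_int D s t" for t
  have IH: "(shifted_act ^^ s) w = (\<lambda>c. \<Sum>t\<le>s. of_int (k t) * U t c)"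
    using Suc.IH unfolding U_def k_def by auto
  have "(shifted_act ^^ Suc s) w a
      = (\<Sum>t\<le>s. of_int (k t) * U (Suc t) a) - of_nat D * (\<Sum>t\<le>s. of_int (k t) * U t a)"
    unfolding funpow.simps(2) comp_def shifted_act_def IH act_sum_of_int_mult by (simp add: U_def)
  also have "\<dots> = (\<Sum>t\<le>Suc s. of_int (shift_coeff_int D (Suc s) t) * U t a)"
  proof -
    have "(\<Sum>t\<le>Suc s. of_int (shift_coeff_int D (Suc s) t) * U t a)
       = (\<Sum>t\<le>Suc s. (if t = 0 then 0 else of_int (k (t - 1)) * U t a))
         - of_nat D * (\<Sum>t\<le>Suc s. of_int (k t) * U t a)"
      by (simp add: k_def shift_coeff_int_Suc sum_subtractf sum_distrib_left algebra_simps
          if_distrib[of "\<lambda>x. of_int x * U _ a"] cong: if_cong)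
    also have "(\<Sum>t\<le>Suc s. (if t = 0 then 0 else of_int (k (t - 1)) * U t a))
        = (\<Sum>t\<le>s. of_int (k t) * U (Suc t) a)"
      by (simp add: sum.atMost_Suc_shift del: sum.atMost_Suc)
    also have "(\<Sum>t\<le>Suc s. of_int (k t) * U t a) = (\<Sum>t\<le>s. of_int (k t) * U t a)"
      by (simp add: k_def shift_coeff_int_def binomial_eq_0)
    finally show ?thesis by simp
  qed
  finally show ?case by (simp add: U_def)
qed

lemma act_pow_q: "(act ^^ t) q a = (\<Sum>b<D. mat_pow D e t a b * q b)"
proof (induction t arbitrary: a)
  case 0
  show ?case
  proof (cases "a < D")
    case True
    then have "{..<D} \<inter> {b. a = b} = {a}" by auto
    then show ?thesis by simp
  qed (simp add: q_def)
next
  case (Suc t)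
  then show ?case by (simp add: act_def mat_pow_mult_vector del: mat_pow.simps(2))
qed

lemma sum_mat_pow_q_path_words:
  assumes g: "\<And>i j. g i j = (if i < D \<and> j < D then letter (C l i j) else 0)"
  shows "a < D \<Longrightarrow> (\<Sum>b<D. mat_pow D g t a b * q b)
    = (\<Sum>js\<in>{xs. set xs \<subseteq> {..<D} \<and> length xs = t}. word (path_word C l (a # js)))"
proof (induction t arbitrary: a)
  case 0
  then have "{..<D} \<inter> {b. a = b} = {a}" by auto
  moreover have "{xs. set xs \<subseteq> {..<D} \<and> length xs = 0} = {[]}" by auto
  ultimately show ?case using 0 by (simp add: path_word_single letter_def q_def)
next
  case (Suc t)
  have "(\<Sum>b<D. mat_pow D g (Suc t) a b * q b)
      = (\<Sum>c<D. \<Sum>js\<in>{xs. set xs \<subseteq> {..<D} \<and> length xs = t}. word (path_word C l (a # c # js)))"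
    unfolding mat_pow_mult_vector
    by (intro sum.cong refl) (simp add: Suc.IH g Suc.prems sum_distrib_left path_word_Cons_Cons word_Cons)
  then show ?case by (simp add: sum_lists_length_Suc del: mat_pow.simps(2))
qed

lemma Abs_free_alg_sum_idx_lists:
  assumes g: "\<And>i j. g i j = (if i < D \<and> j < D then letter (C l i j) else 0)"
    and W: "\<And>a js. length js = t \<Longrightarrow> W (a # js) = P l a # path_word C l (a # js)"
  shows "Abs_free_alg (sum_el (\<lambda>is. mono (W is)) (idx_lists d l t))
    = (\<Sum>a<D. p a * (\<Sum>b<D. mat_pow D g t a b * q b))"
proof -
  have "Abs_free_alg (sum_el (\<lambda>is. mono (W is)) (idx_lists d l t))
      = (\<Sum>xs\<in>{xs. set xs \<subseteq> {..<D} \<and> length xs = Suc t}. word (W xs))"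
    unfolding Abs_free_alg_sum_el_mono idx_lists_def by (simp add: conj_commute)
  also have "\<dots> = (\<Sum>a<D. \<Sum>js\<in>{xs. set xs \<subseteq> {..<D} \<and> length xs = t}. p a * word (path_word C l (a # js)))"
    unfolding sum_lists_length_Suc by (intro sum.cong refl) (simp add: W word_Cons p_def)
  finally show ?thesis
    by (simp add: sum_mat_pow_q_path_words[of g C, OF g] sum_distrib_left)
qed

lemma Abs_free_alg_bgen: "Abs_free_alg (bgen d l t) = (\<Sum>a<D. p a * (act ^^ t) q a)"
  unfolding bgen_def act_pow_q by (rule Abs_free_alg_sum_idx_lists[OF e_def bword_Cons])

lemma Abs_free_alg_bgen':
  "Abs_free_alg (bgen' d l t) = (-1) ^ t * (\<Sum>a<D. p a * (\<Sum>b<D. mat_pow D e' t a b * q b))"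
proof -
  let ?X = "Abs_free_alg (sum_el (\<lambda>is. mono (bword' l t is)) (idx_lists d l t))"
  have "Rep_free_alg (of_int ((-1) ^ t) * ?X) = bgen' d l t"
    unfolding Rep_free_alg_of_int_mult bgen'_def by (simp add: Abs_free_alg_inverse)
  then have "Abs_free_alg (bgen' d l t) = of_int ((-1) ^ t) * ?X"
    by (metis Rep_free_alg_inverse)
  then show ?thesis
    by (simp add: Abs_free_alg_sum_idx_lists[OF e'_def bword'_Cons])
qed

lemma vanishes_e'_pow_q:
  assumes "a < D" and x: "x \<in> valid_span n d"
  shows "vanishes n d (x * ((-1) ^ s * (\<Sum>b<D. mat_pow D e' s a b * q b) - (shifted_act ^^ s) q a))"
proof -
  let ?M = "\<lambda>b. mat_pow D e' s a b" and ?T = "\<lambda>b. mat_pow D (\<lambda>i j. e j i) s b a"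
  let ?A = "\<Sum>b<D. ?M b * q b" and ?B = "\<Sum>b<D. q b * ?M b" and ?C = "\<Sum>b<D. q b * ?T b"
  let ?Y = "(shifted_act ^^ s) q a"
  define sg :: free_alg where "sg = (-1) ^ s"
  have sg_of_int: "sg = of_int ((-1) ^ s)" unfolding sg_def by simp
  have sg_central: "y * sg = sg * y" for y
    unfolding sg_of_int by (rule mult_of_int_commute[symmetric])
  have "tcong n d ?A ?B"
    by (intro tcong_sum tcong_sym[OF q_commute_e'_pow[OF assms(1)]])
  then have move_q: "vanishes n d (sg * (x * (?A - ?B)))"
    unfolding sg_def by (intro vanishes_minus_one_power_mult vanishes_if_tcong x)
  have "vanishes n d (\<Sum>b<D. (x * q b) * ?M b - sg * ((x * q b) * ?T b))"
    unfolding sg_def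
    by (intro vanishes_sum vanishes_e'_pow_right_end[OF assms(1)] valid_span_mult x valid_span_q) simp
  then have right_end: "vanishes n d (sg * (x * ?B - sg * (x * ?C)))"
    unfolding sg_def
    by (intro vanishes_minus_one_power_mult)
       (simp add: sum_subtractf sum_distrib_left mult.assoc)
  have "tcong n d ?C ?Y"
    by (rule tcong_covariant_transpose_pow[OF covariant_q assms(1)])
  then have move_q_back: "vanishes n d (x * (?C - ?Y))"
    by (rule vanishes_if_tcong[OF _ x])
  have "sg * sg = 1" unfolding sg_of_int of_int_mult[symmetric] by simp
  then have sg_sg: "sg * (sg * z) = z" for z by (metis mult.assoc mult_1)
  have x_sg: "x * (sg * z) = sg * (x * z)" for z by (metis mult.assoc sg_central)
  have "x * (sg * ?A - ?Y) = sg * (x * (?A - ?B)) + sg * (x * ?B - sg * (x * ?C)) + x * (?C - ?Y)"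
    by (simp add: right_diff_distrib sg_sg x_sg)
  with vanishes_add[OF vanishes_add[OF move_q right_end] move_q_back] show ?thesis
    by (simp add: sg_def)
qed

lemma vanishes_bgen'_shift:
  "vanishes n d (Abs_free_alg (bgen' d l s)
     - (\<Sum>t\<le>s. of_int (shift_coeff_int D s t) * Abs_free_alg (bgen d l t)))"
proof -
  have "(\<Sum>t\<le>s. of_int (shift_coeff_int D s t) * Abs_free_alg (bgen d l t))
      = (\<Sum>a<D. p a * (shifted_act ^^ s) q a)"
    unfolding Abs_free_alg_bgen shifted_act_pow_binomial sum_distrib_left of_int_mult_left_commute
    by (rule sum.swap)
  moreover have "Abs_free_alg (bgen' d l s) = (\<Sum>a<D. p a * ((-1) ^ s * (\<Sum>b<D. mat_pow D e' s a b * q b)))"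
    unfolding Abs_free_alg_bgen' sum_distrib_left
    by (simp add: of_int_mult_left_commute[where k = "(-1) ^ s", simplified])
  moreover have "vanishes n d (\<Sum>a<D. p a * ((-1) ^ s * (\<Sum>b<D. mat_pow D e' s a b * q b)
      - (shifted_act ^^ s) q a))"
    by (intro vanishes_sum vanishes_e'_pow_q valid_span_p) simp
  ultimately show ?thesis
    by (simp add: right_diff_distrib sum_subtractf)
qed

lemma bgen'_minus_shifted_bgen_in_Jset:
  "sub_el (bgen' d l s) (sum_el (\<lambda>t. smult_el (shift_coeff (of_nat D) s t) (bgen d l t)) {..s})
    \<in> Jset n d"
proof -
  have "Rep_free_alg (Abs_free_alg (bgen' d l s)
        - (\<Sum>t\<le>s. of_int (shift_coeff_int D s t) * Abs_free_alg (bgen d l t)))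
      = sub_el (bgen' d l s) (sum_el (\<lambda>t. smult_el (shift_coeff (of_nat D) s t) (bgen d l t)) {..s})"
    by (simp add: Rep_free_alg_diff Rep_free_alg_sum Rep_free_alg_of_int_mult Abs_free_alg_inverse
        of_int_shift_coeff_int)
  with vanishes_bgen'_shift[of s] show ?thesis by (simp only:)
qed

end

theorem lemma3p22:
  fixes n :: nat and d :: "nat \<Rightarrow> nat"
  assumes "n \<ge> 1"
  shows "\<forall>l<n. \<forall>s.
    sub_el (bgen' d l s)
      (sum_el (\<lambda>t. smult_el (shift_coeff (of_nat (d l)) s t) (bgen d l t)) {..s})
    \<in> Jset n d"
  using vertex.bgen'_minus_shifted_bgen_in_Jset vertex.intro by blast

end
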